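(* Let $\mathbb{A}$ and $\mathbb{B}$ be $\sigma$-structures and let $k\ge\max_{f\in\sigma}\mathrm{ar}(f)$. If there is an overcast from $\mathbb{A}$ to $\mathbb{B}$, then $\mathbb{A}\succeq_k\mathbb{B}$, i.e. $\mathrm{opt}_{k}^{\mathrm{frac}}(\mathbb{A},\mathbb{C})\ge\mathrm{opt}_{k}^{\mathrm{frac}}(\mathbb{B},\mathbb{C})$ for every $\sigma$-structure $\mathbb{C}$.
   Context: A $\sigma$-structure $\mathbb{A}$ is a finite domain $A$ with functions $f^{\mathbb{A}}\colon A^{\mathrm{ar}(f)}\to\mathbb{Q}_{\ge0}$, $f\in\sigma$; $\mathrm{tup}(\mathbb{A})$ is the set of pairs $(f,\bar x)$ with $\bar x\in A^{\mathrm{ar}(f)}$. An overcast from $\mathbb{A}$ to $\mathbb{B}$ is a probability distribution $\omega$ over maps $g\colon A\to B$ such that for every $(f,\bar x)\in\mathrm{tup}(\mathbb{B})$, $\mathbb{E}_{g\sim\omega}\sum_{\bar y:\,g(\bar y)=\bar x}f^{\mathbb{A}}(\bar y)\ge f^{\mathbb{B}}(\bar x)$. For a tuple $\bar x$, $\{\bar x\}$ denotes the set of its entries. The Sherali–Adams relaxation of level $k$ of $(\mathbb{A},\mathbb{C})$ is the linear program with a variable $\lambda(X,s)$ for each $X\subseteq A$ with $|X|\le k$ and each map $s\colon X\to C$, maximising $\sum_{(f,\bar x)\in\mathrm{tup}(\mathbb{A})}\sum_{s\colon\{\bar x\}\to C}\lambda(\{\bar x\},s)f^{\mathbb{A}}(\bar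 x)f^{\mathbb{C}}(s(\bar x))$ subject to: $\lambda(X,s)=\sum_{r\colon Y\to C,\ r|_X=s}\lambda(Y,r)$ for all $X\subseteq Y\subseteq A$ with $|Y|\le k$ and $s\colon X\to C$; $\sum_{s\colon X\to C}\lambda(X,s)=1$ for all $X\subseteq A$ with $|X|\le k$; and $\lambda(X,s)\ge0$. Its optimum value is denoted $\mathrm{opt}_k^{\mathrm{frac}}(\mathbb{A},\mathbb{C})$. *)

theory Defs
  imports "HOL-Probability.Probability_Mass_Function" "HOL-Library.FuncSet"
begin

text \<open>A sig-structure is a pair (dom, interp) of a finite nonempty domain and an
  interpretation interp f : dom^(ar f) -> Q_{\<ge>0}; tuples are lists of length ar f.\<close>

type_synonym ('s, 'a) struct = "'a set \<times> ('s \<Rightarrow> 'a list \<Rightarrow> rat)"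

definition tuples :: "('s \<Rightarrow> nat) \<Rightarrow> 'a set \<Rightarrow> 's \<Rightarrow> 'a list set" where
  "tuples ar A f = {xs. set xs \<subseteq> A \<and> length xs = ar f}"

definition tup :: "'s set \<Rightarrow> ('s \<Rightarrow> nat) \<Rightarrow> ('s, 'a) struct \<Rightarrow> ('s \<times> 'a list) set" where
  "tup sig ar S = {(f, xs). f \<in> sig \<and> xs \<in> tuples ar (fst S) f}"

definition is_structure :: "'s set \<Rightarrow> ('s \<Rightarrow> nat) \<Rightarrow> ('s, 'a) struct \<Rightarrow> bool" where
  "is_structure sig ar S \<longleftrightarrow> finite (fst S) \<and> fst S \<noteq> {} \<and>
     (\<forall>(f, xs) \<in> tup sig ar S. snd S f xs \<ge> 0)"

definition is_overcast :: "'s set \<Rightarrow> ('s \<Rightarrow> nat) \<Rightarrow> ('s, 'a) struct \<Rightarrow> ('s, 'b) struct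
    \<Rightarrow> ('a \<Rightarrow> 'b) pmf \<Rightarrow> bool" where
  "is_overcast sig ar SA SB \<omega> \<longleftrightarrow>
     set_pmf \<omega> \<subseteq> (fst SA \<rightarrow>\<^sub>E fst SB) \<and>
     (\<forall>(f, xs) \<in> tup sig ar SB.
        measure_pmf.expectation \<omega>
          (\<lambda>g. \<Sum>ys \<in> {ys \<in> tuples ar (fst SA) f. map g ys = xs}. real_of_rat (snd SA f ys))
        \<ge> real_of_rat (snd SB f xs))"

definition overcast_exists :: "'s set \<Rightarrow> ('s \<Rightarrow> nat) \<Rightarrow> ('s, 'a) struct \<Rightarrow> ('s, 'b) struct \<Rightarrow> bool" where
  "overcast_exists sig ar SA SB \<longleftrightarrow> (\<exists>\<omega>. is_overcast sig ar SA SB \<omega>)"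

text \<open>Sherali--Adams relaxation of level k: variables lam X s for X \<subseteq> A, card X \<le> k,
  s an extensional map X to C.\<close>
definition SA_feasible :: "nat \<Rightarrow> 'a set \<Rightarrow> 'c set \<Rightarrow> ('a set \<Rightarrow> ('a \<Rightarrow> 'c) \<Rightarrow> real) \<Rightarrow> bool" where
  "SA_feasible k A C lam \<longleftrightarrow>
     (\<forall>X Y s. X \<subseteq> Y \<and> Y \<subseteq> A \<and> card Y \<le> k \<and> s \<in> (X \<rightarrow>\<^sub>E C) \<longrightarrow>
        lam X s = (\<Sum>r \<in> {r \<in> Y \<rightarrow>\<^sub>E C. restrict r X = s}. lam Y r)) \<and>
     (\<forall>X. X \<subseteq> A \<and> card X \<le> k \<longrightarrow> (\<Sum>s \<in> X \<rightarrow>\<^sub>E C. lam X s) = 1) \<and>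
     (\<forall>X s. X \<subseteq> A \<and> card X \<le> k \<and> s \<in> (X \<rightarrow>\<^sub>E C) \<longrightarrow> lam X s \<ge> 0)"

definition SA_objective :: "'s set \<Rightarrow> ('s \<Rightarrow> nat) \<Rightarrow> ('s, 'a) struct \<Rightarrow> ('s, 'c) struct
    \<Rightarrow> ('a set \<Rightarrow> ('a \<Rightarrow> 'c) \<Rightarrow> real) \<Rightarrow> real" where
  "SA_objective sig ar SA SC lam =
     (\<Sum>(f, xs) \<in> tup sig ar SA. \<Sum>s \<in> (set xs \<rightarrow>\<^sub>E fst SC).
        lam (set xs) s * real_of_rat (snd SA f xs) * real_of_rat (snd SC f (map s xs)))"

definition opt_frac :: "'s set \<Rightarrow> ('s \<Rightarrow> nat) \<Rightarrow> nat \<Rightarrow> ('s, 'a) struct \<Rightarrow> ('s, 'c) struct \<Rightarrow> real" where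
  "opt_frac sig ar k SA SC =
     Sup {SA_objective sig ar SA SC lam | lam. SA_feasible k (fst SA) (fst SC) lam}"

end

(*
  A map g : A -> B pulls a Sherali-Adams solution lam for (B, C) back to one for (A, C): the local
  distribution on a variable set X is that of t o g on X, where t is drawn from lam at g ` X
  (SA_pullback). Consistency of lam on B makes this consistent on A, and averaging over g ~ omega
  preserves feasibility because the feasible region is convex. In the objective, the pulled-back solution
  gives each tuple ys of B its local value under lam, weighted by the total A-weight of the tuples
  that g maps onto ys. Since k bounds every arity, these local values are nonnegative, and the
  overcast condition says the expected weight dominates the B-weight of ys.
*)

theory Submission
  imports Defs
begin

lemma finite_tuples: "finite A \<Longrightarrow> finite (tuples ar A f)"
  unfolding tuples_def using finite_lists_length_eq by auto

lemma tup_eq_Sigma: "tup sig ar S = Sigma sig (tuples ar (fst S))"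
  unfolding tup_def by auto

lemma sum_tup_eq_nested:
  assumes "finite sig" "finite (fst S)"
  shows "(\<Sum>(f, xs)\<in>tup sig ar S. h f xs) = (\<Sum>f\<in>sig. \<Sum>xs\<in>tuples ar (fst S) f. h f xs)"
  unfolding tup_eq_Sigma using assms by (intro sum.Sigma[symmetric] ballI finite_tuples)

lemma set_tup_subset_card_le:
  assumes "(f, xs) \<in> tup sig ar S" "ar f \<le> k"
  shows "set xs \<subseteq> fst S" "card (set xs) \<le> k"
  using assms card_length[of xs] by (auto simp: tup_def tuples_def)

lemma map_in_tup: "(f, xs) \<in> tup sig ar S \<Longrightarrow> s \<in> set xs \<rightarrow>\<^sub>E fst T \<Longrightarrow> (f, map s xs) \<in> tup sig ar T"
  by (auto simp: tup_def tuples_def)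

lemma tup_weight_nonneg: "is_structure sig ar S \<Longrightarrow> (f, xs) \<in> tup sig ar S \<Longrightarrow> 0 \<le> real_of_rat (snd S f xs)"
  by (auto simp: is_structure_def)

lemma sum_tuples_map:
  fixes w :: "'a list \<Rightarrow> 'r::comm_semiring_0"
  assumes "finite A" "finite B" "g ` A \<subseteq> B"
  shows "(\<Sum>xs\<in>tuples ar A f. w xs * F (map g xs))
       = (\<Sum>ys\<in>tuples ar B f. F ys * (\<Sum>xs\<in>{xs\<in>tuples ar A f. map g xs = ys}. w xs))"
proof -
  have fiber: "F ys * (\<Sum>xs\<in>{xs\<in>tuples ar A f. map g xs = ys}. w xs)
      = (\<Sum>xs\<in>{xs\<in>tuples ar A f. map g xs = ys}. w xs * F (map g xs))" for ys
  proof -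
    have "F ys * (\<Sum>xs\<in>{xs\<in>tuples ar A f. map g xs = ys}. w xs)
        = (\<Sum>xs\<in>{xs\<in>tuples ar A f. map g xs = ys}. w xs * F ys)"
      by (simp add: sum_distrib_left mult.commute)
    also have "\<dots> = (\<Sum>xs\<in>{xs\<in>tuples ar A f. map g xs = ys}. w xs * F (map g xs))"
      by (rule sum.cong) auto
    finally show ?thesis .
  qed
  have "(\<Sum>ys\<in>tuples ar B f. \<Sum>xs\<in>{xs\<in>tuples ar A f. map g xs = ys}. w xs * F (map g xs))
      = (\<Sum>xs\<in>tuples ar A f. w xs * F (map g xs))"
    using assms by (intro sum.group finite_tuples) (auto simp: tuples_def image_subset_iff)
  then show ?thesis
    unfolding fiber ..
qed

lemma
  assumes "SA_feasible k A C lam"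
  shows SA_feasible_marginal: "\<lbrakk>X \<subseteq> Y; Y \<subseteq> A; card Y \<le> k; s \<in> X \<rightarrow>\<^sub>E C\<rbrakk>
      \<Longrightarrow> lam X s = (\<Sum>r\<in>{r\<in>Y \<rightarrow>\<^sub>E C. restrict r X = s}. lam Y r)"
    and SA_feasible_sum_eq_1: "\<lbrakk>X \<subseteq> A; card X \<le> k\<rbrakk> \<Longrightarrow> (\<Sum>s\<in>X \<rightarrow>\<^sub>E C. lam X s) = 1"
    and SA_feasible_nonneg: "\<lbrakk>X \<subseteq> A; card X \<le> k; s \<in> X \<rightarrow>\<^sub>E C\<rbrakk> \<Longrightarrow> 0 \<le> lam X s"
  using assms unfolding SA_feasible_def by blast+

lemma SA_feasibleI:
  assumes "\<And>X Y s. \<lbrakk>X \<subseteq> Y; Y \<subseteq> A; card Y \<le> k; s \<in> X \<rightarrow>\<^sub>E C\<rbrakk>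
      \<Longrightarrow> lam X s = (\<Sum>r\<in>{r\<in>Y \<rightarrow>\<^sub>E C. restrict r X = s}. lam Y r)"
    and "\<And>X. \<lbrakk>X \<subseteq> A; card X \<le> k\<rbrakk> \<Longrightarrow> (\<Sum>s\<in>X \<rightarrow>\<^sub>E C. lam X s) = 1"
    and "\<And>X s. \<lbrakk>X \<subseteq> A; card X \<le> k; s \<in> X \<rightarrow>\<^sub>E C\<rbrakk> \<Longrightarrow> 0 \<le> lam X s"
  shows "SA_feasible k A C lam"
  unfolding SA_feasible_def
  by (intro conjI allI impI; elim conjE; rule assms; assumption)

lemma SA_feasible_le_1:
  assumes "SA_feasible k A C lam" "X \<subseteq> A" "card X \<le> k" "finite X" "finite C" "s \<in> X \<rightarrow>\<^sub>E C"
  shows "lam X s \<le> 1"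
proof -
  have "lam X s \<le> (\<Sum>s\<in>X \<rightarrow>\<^sub>E C. lam X s)"
    using assms(4-6) SA_feasible_nonneg[OF assms(1-3)] by (intro member_le_sum) (auto simp: finite_PiE)
  also have "\<dots> = 1"
    by (rule SA_feasible_sum_eq_1[OF assms(1-3)])
  finally show ?thesis .
qed

lemma SA_feasible_marginal_sum:
  assumes "SA_feasible k A C lam" and "X \<subseteq> Y" "Y \<subseteq> A" "card Y \<le> k"
    and "finite Y" "finite C"
  shows "(\<Sum>r\<in>Y \<rightarrow>\<^sub>E C. lam Y r * h (restrict r X)) = (\<Sum>s\<in>X \<rightarrow>\<^sub>E C. lam X s * h s)"
proof -
  have "finite X"
    using assms(2,5) finite_subset by blast
  have "(\<Sum>s\<in>X \<rightarrow>\<^sub>E C. lam X s * h s)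
      = (\<Sum>s\<in>X \<rightarrow>\<^sub>E C. (\<Sum>r\<in>{r\<in>Y \<rightarrow>\<^sub>E C. restrict r X = s}. lam Y r) * h s)"
    using SA_feasible_marginal[OF assms(1-4)] by (intro sum.cong) simp_all
  also have "\<dots> = (\<Sum>s\<in>X \<rightarrow>\<^sub>E C. \<Sum>r\<in>{r\<in>Y \<rightarrow>\<^sub>E C. restrict r X = s}. lam Y r * h (restrict r X))"
    unfolding sum_distrib_right by (intro sum.cong refl) simp
  also have "\<dots> = (\<Sum>r\<in>Y \<rightarrow>\<^sub>E C. lam Y r * h (restrict r X))"
    by (rule sum.group) (use assms(2,5,6) \<open>finite X\<close> in \<open>auto simp: finite_PiE PiE_iff\<close>)
  finally show ?thesis by (rule sym)
qed

lemma SA_feasible_point_mass: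
  assumes "finite A" "finite C" "h ` A \<subseteq> C"
  shows "SA_feasible k A C (\<lambda>X s. of_bool (s = restrict h X))"
proof (rule SA_feasibleI)
  fix X Y s assume XY: "X \<subseteq> Y" "Y \<subseteq> A"
  have "finite Y"
    using XY(2) assms(1) by (rule finite_subset)
  then have "finite (Y \<rightarrow>\<^sub>E C)" "restrict h Y \<in> Y \<rightarrow>\<^sub>E C"
    using XY(2) assms(2,3) by (auto simp: finite_PiE)
  moreover have "restrict (restrict h Y) X = restrict h X"
    using XY(1) by (auto simp: restrict_def fun_eq_iff)
  ultimately show "of_bool (s = restrict h X)
      = (\<Sum>r\<in>{r\<in>Y \<rightarrow>\<^sub>E C. restrict r X = s}. of_bool (r = restrict h Y) :: real)"
    by (auto simp: of_bool_def)
next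
  fix X assume "X \<subseteq> A"
  moreover from this have "finite X"
    using assms(1) by (rule finite_subset)
  ultimately have "finite (X \<rightarrow>\<^sub>E C)" "restrict h X \<in> X \<rightarrow>\<^sub>E C"
    using assms(2,3) by (auto simp: finite_PiE)
  then show "(\<Sum>s\<in>X \<rightarrow>\<^sub>E C. of_bool (s = restrict h X)) = (1 :: real)"
    by (simp add: of_bool_def)
qed simp

lemma SA_feasible_convex_combination:
  assumes "\<And>g. g \<in> G \<Longrightarrow> 0 \<le> p g" "(\<Sum>g\<in>G. p g) = 1"
    and "\<And>g. g \<in> G \<Longrightarrow> SA_feasible k A C (lam g)"
  shows "SA_feasible k A C (\<lambda>X s. \<Sum>g\<in>G. p g * lam g X s)"
proof (rule SA_feasibleI)
  show "(\<Sum>g\<in>G. p g * lam g X s)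
      = (\<Sum>r\<in>{r\<in>Y \<rightarrow>\<^sub>E C. restrict r X = s}. \<Sum>g\<in>G. p g * lam g Y r)"
    if "X \<subseteq> Y" "Y \<subseteq> A" "card Y \<le> k" "s \<in> X \<rightarrow>\<^sub>E C" for X Y s
  proof -
    have "(\<Sum>g\<in>G. p g * lam g X s)
        = (\<Sum>g\<in>G. p g * (\<Sum>r\<in>{r\<in>Y \<rightarrow>\<^sub>E C. restrict r X = s}. lam g Y r))"
      using SA_feasible_marginal[OF assms(3) that] by (intro sum.cong refl) simp
    also have "\<dots> = (\<Sum>g\<in>G. \<Sum>r\<in>{r\<in>Y \<rightarrow>\<^sub>E C. restrict r X = s}. p g * lam g Y r)"
      by (simp only: sum_distrib_left)
    also have "\<dots> = (\<Sum>r\<in>{r\<in>Y \<rightarrow>\<^sub>E C. restrict r X = s}. \<Sum>g\<in>G. p g * lam g Y r)"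
      by (rule sum.swap)
    finally show ?thesis .
  qed
  show "(\<Sum>s\<in>X \<rightarrow>\<^sub>E C. \<Sum>g\<in>G. p g * lam g X s) = 1" if "X \<subseteq> A" "card X \<le> k" for X
  proof -
    have "(\<Sum>s\<in>X \<rightarrow>\<^sub>E C. \<Sum>g\<in>G. p g * lam g X s) = (\<Sum>g\<in>G. \<Sum>s\<in>X \<rightarrow>\<^sub>E C. p g * lam g X s)"
      by (rule sum.swap)
    also have "\<dots> = (\<Sum>g\<in>G. p g * (\<Sum>s\<in>X \<rightarrow>\<^sub>E C. lam g X s))"
      by (simp only: sum_distrib_left)
    also have "\<dots> = 1"
      using SA_feasible_sum_eq_1[OF assms(3) that] assms(2) by simp
    finally show ?thesis .
  qed
  show "0 \<le> (\<Sum>g\<in>G. p g * lam g X s)"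
    if "X \<subseteq> A" "card X \<le> k" "s \<in> X \<rightarrow>\<^sub>E C" for X s
    using assms(1) SA_feasible_nonneg[OF assms(3) that] by (intro sum_nonneg mult_nonneg_nonneg)
qed

definition SA_tuple_value :: "('s, 'c) struct \<Rightarrow> ('a set \<Rightarrow> ('a \<Rightarrow> 'c) \<Rightarrow> real) \<Rightarrow> 's \<Rightarrow> 'a list \<Rightarrow> real" where
  "SA_tuple_value SC lam f xs =
     (\<Sum>s\<in>set xs \<rightarrow>\<^sub>E fst SC. lam (set xs) s * real_of_rat (snd SC f (map s xs)))"

lemma SA_objective_eq_sum_tuple_value:
  "SA_objective sig ar SA SC lam =
     (\<Sum>(f, xs)\<in>tup sig ar SA. real_of_rat (snd SA f xs) * SA_tuple_value SC lam f xs)"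
  unfolding SA_objective_def SA_tuple_value_def
  by (intro sum.cong refl) (auto simp: sum_distrib_left mult_ac)

lemma SA_tuple_value_nonneg:
  assumes "SA_feasible k (fst S) (fst SC) lam" "is_structure sig ar SC"
    and "(f, xs) \<in> tup sig ar S" "ar f \<le> k"
  shows "0 \<le> SA_tuple_value SC lam f xs"
  unfolding SA_tuple_value_def
  using SA_feasible_nonneg[OF assms(1) set_tup_subset_card_le[OF assms(3,4)]]
    tup_weight_nonneg[OF assms(2) map_in_tup[OF assms(3)]]
  by (intro sum_nonneg mult_nonneg_nonneg)

lemma SA_tuple_value_le:
  assumes "SA_feasible k (fst S) (fst SC) lam" "is_structure sig ar SC"
    and "(f, xs) \<in> tup sig ar S" "ar f \<le> k"
  shows "SA_tuple_value SC lam f xs \<le> (\<Sum>s\<in>set xs \<rightarrow>\<^sub>E fst SC. real_of_rat (snd SC f (map s xs)))"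
  unfolding SA_tuple_value_def
proof (rule sum_mono)
  fix s assume s: "s \<in> set xs \<rightarrow>\<^sub>E fst SC"
  have "finite (fst SC)"
    using assms(2) by (simp add: is_structure_def)
  then have "lam (set xs) s \<le> 1"
    using SA_feasible_le_1[OF assms(1) set_tup_subset_card_le[OF assms(3,4)] finite_set _ s] by blast
  with tup_weight_nonneg[OF assms(2) map_in_tup[OF assms(3) s]]
    SA_feasible_nonneg[OF assms(1) set_tup_subset_card_le[OF assms(3,4)] s]
  show "lam (set xs) s * real_of_rat (snd SC f (map s xs)) \<le> real_of_rat (snd SC f (map s xs))"
    by (rule mult_left_le_one_le)
qed

lemma SA_objective_le:
  assumes "is_structure sig ar SA" "is_structure sig ar SC" "\<forall>f\<in>sig. ar f \<le> k"
    and "SA_feasible k (fst SA) (fst SC) lam"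
  shows "SA_objective sig ar SA SC lam \<le> (\<Sum>(f, xs)\<in>tup sig ar SA.
           real_of_rat (snd SA f xs) * (\<Sum>s\<in>set xs \<rightarrow>\<^sub>E fst SC. real_of_rat (snd SC f (map s xs))))"
  unfolding SA_objective_eq_sum_tuple_value
proof (rule sum_mono, clarify)
  fix f xs assume fxs: "(f, xs) \<in> tup sig ar SA"
  then have "ar f \<le> k"
    using assms(3) by (auto simp: tup_def)
  with fxs show "real_of_rat (snd SA f xs) * SA_tuple_value SC lam f xs
      \<le> real_of_rat (snd SA f xs) * (\<Sum>s\<in>set xs \<rightarrow>\<^sub>E fst SC. real_of_rat (snd SC f (map s xs)))"
    using SA_tuple_value_le[OF assms(4,2)] tup_weight_nonneg[OF assms(1)] by (intro mult_left_mono)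
qed

lemma SA_objective_convex_combination:
  "SA_objective sig ar SA SC (\<lambda>X s. \<Sum>g\<in>G. p g * lam g X s)
     = (\<Sum>g\<in>G. p g * SA_objective sig ar SA SC (lam g))"
proof -
  have tuple_value: "SA_tuple_value SC (\<lambda>X s. \<Sum>g\<in>G. p g * lam g X s) f xs
      = (\<Sum>g\<in>G. p g * SA_tuple_value SC (lam g) f xs)" for f xs
    unfolding SA_tuple_value_def sum_distrib_left sum_distrib_right
    by (subst sum.swap) (simp add: mult_ac)
  have "SA_objective sig ar SA SC (\<lambda>X s. \<Sum>g\<in>G. p g * lam g X s)
      = (\<Sum>(f, xs)\<in>tup sig ar SA. \<Sum>g\<in>G. p g * (real_of_rat (snd SA f xs) * SA_tuple_value SC (lam g) f xs))"
    unfolding SA_objective_eq_sum_tuple_value tuple_value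
    by (intro sum.cong refl) (auto simp: sum_distrib_left mult_ac)
  also have "\<dots> = (\<Sum>g\<in>G. p g * SA_objective sig ar SA SC (lam g))"
    unfolding SA_objective_eq_sum_tuple_value sum_distrib_left split_beta
    by (rule sum.swap)
  finally show ?thesis .
qed

definition SA_pullback :: "('a \<Rightarrow> 'b) \<Rightarrow> 'c set \<Rightarrow> ('b set \<Rightarrow> ('b \<Rightarrow> 'c) \<Rightarrow> real)
    \<Rightarrow> 'a set \<Rightarrow> ('a \<Rightarrow> 'c) \<Rightarrow> real" where
  "SA_pullback g C lam X s = (\<Sum>t\<in>{t\<in>g ` X \<rightarrow>\<^sub>E C. restrict (t \<circ> g) X = s}. lam (g ` X) t)"

lemma sum_SA_pullback:
  assumes "finite X" "finite C"
  shows "(\<Sum>s\<in>X \<rightarrow>\<^sub>E C. SA_pullback g C lam X s * h s)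
       = (\<Sum>t\<in>g ` X \<rightarrow>\<^sub>E C. lam (g ` X) t * h (restrict (t \<circ> g) X))"
proof -
  have "(\<Sum>s\<in>X \<rightarrow>\<^sub>E C. SA_pullback g C lam X s * h s)
      = (\<Sum>s\<in>X \<rightarrow>\<^sub>E C. \<Sum>t\<in>{t\<in>g ` X \<rightarrow>\<^sub>E C. restrict (t \<circ> g) X = s}.
           lam (g ` X) t * h (restrict (t \<circ> g) X))"
    unfolding SA_pullback_def sum_distrib_right by (intro sum.cong refl) auto
  also have "\<dots> = (\<Sum>t\<in>g ` X \<rightarrow>\<^sub>E C. lam (g ` X) t * h (restrict (t \<circ> g) X))"
    by (rule sum.group) (use assms in \<open>auto simp: finite_PiE PiE_iff\<close>)
  finally show ?thesis .
qed

lemma SA_pullback_consistent: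
  assumes "SA_feasible k B C lam" "g ` Y \<subseteq> B" "card (g ` Y) \<le> k" "X \<subseteq> Y" "finite Y" "finite C"
  shows "SA_pullback g C lam X s = (\<Sum>r\<in>{r\<in>Y \<rightarrow>\<^sub>E C. restrict r X = s}. SA_pullback g C lam Y r)"
proof -
  have "finite X"
    using assms(5,4) by (rule finite_subset[rotated])
  have "(\<Sum>r\<in>{r\<in>Y \<rightarrow>\<^sub>E C. restrict r X = s}. SA_pullback g C lam Y r)
      = (\<Sum>r\<in>Y \<rightarrow>\<^sub>E C. SA_pullback g C lam Y r * of_bool (restrict r X = s))"
    using assms(5,6) by (simp add: finite_PiE Int_def)
  also have "\<dots> = (\<Sum>t\<in>g ` Y \<rightarrow>\<^sub>E C. lam (g ` Y) t * of_bool (restrict (restrict (t \<circ> g) Y) X = s))"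
    using assms(5,6) by (rule sum_SA_pullback)
  \<comment> \<open>the event depends on t only through its restriction to g ` X, where lam is consistent\<close>
  also have "\<dots> = (\<Sum>t\<in>g ` Y \<rightarrow>\<^sub>E C. lam (g ` Y) t * of_bool (restrict (restrict t (g ` X) \<circ> g) X = s))"
    using assms(4) by (intro sum.cong refl) (auto simp: restrict_def fun_eq_iff)
  also have "\<dots> = (\<Sum>u\<in>g ` X \<rightarrow>\<^sub>E C. lam (g ` X) u * of_bool (restrict (u \<circ> g) X = s))"
    using assms(2-6) by (intro SA_feasible_marginal_sum[OF assms(1)]) auto
  also have "\<dots> = SA_pullback g C lam X s"
    using \<open>finite X\<close> assms(6) by (simp add: SA_pullback_def finite_PiE Int_def)
  finally show ?thesis ..
qed

lemma SA_feasible_pullback: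
  assumes "SA_feasible k B C lam" "g ` A \<subseteq> B" "finite A" "finite C"
  shows "SA_feasible k A C (SA_pullback g C lam)"
proof (rule SA_feasibleI)
  have image: "finite X" "g ` X \<subseteq> B" "card (g ` X) \<le> k" if "X \<subseteq> A" "card X \<le> k" for X
  proof -
    show "finite X"
      using that(1) assms(3) by (rule finite_subset)
    then show "card (g ` X) \<le> k"
      using card_image_le[of X g] that(2) by linarith
    show "g ` X \<subseteq> B"
      using that(1) assms(2) by blast
  qed
  show "SA_pullback g C lam X s = (\<Sum>r\<in>{r\<in>Y \<rightarrow>\<^sub>E C. restrict r X = s}. SA_pullback g C lam Y r)"
    if "X \<subseteq> Y" "Y \<subseteq> A" "card Y \<le> k" for X Y s
    using assms(1) image(2,3)[OF that(2,3)] that(1) image(1)[OF that(2,3)] assms(4)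
    by (rule SA_pullback_consistent)
  show "(\<Sum>s\<in>X \<rightarrow>\<^sub>E C. SA_pullback g C lam X s) = 1" if "X \<subseteq> A" "card X \<le> k" for X
    using sum_SA_pullback[OF image(1)[OF that] assms(4), where g = g and lam = lam and h = "\<lambda>_. 1"]
      SA_feasible_sum_eq_1[OF assms(1) image(2,3)[OF that]]
    by simp
  show "0 \<le> SA_pullback g C lam X s" if "X \<subseteq> A" "card X \<le> k" for X s
    unfolding SA_pullback_def
    using SA_feasible_nonneg[OF assms(1) image(2,3)[OF that]] by (intro sum_nonneg) simp
qed

lemma SA_tuple_value_pullback:
  assumes "finite (fst SC)"
  shows "SA_tuple_value SC (SA_pullback g (fst SC) lam) f xs = SA_tuple_value SC lam f (map g xs)"
proof -
  have map_restrict: "map (restrict (t \<circ> g) (set xs)) xs = map t (map g xs)" for t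
    by (auto simp: restrict_def)
  show ?thesis
    unfolding SA_tuple_value_def sum_SA_pullback[OF finite_set assms] map_restrict
    by simp
qed

lemma SA_objective_pullback:
  assumes "finite sig" "finite (fst SA)" "finite (fst SB)" "finite (fst SC)" "g ` fst SA \<subseteq> fst SB"
  shows "SA_objective sig ar SA SC (SA_pullback g (fst SC) lam)
       = (\<Sum>(f, ys)\<in>tup sig ar SB. SA_tuple_value SC lam f ys *
            (\<Sum>xs\<in>{xs\<in>tuples ar (fst SA) f. map g xs = ys}. real_of_rat (snd SA f xs)))"
  unfolding SA_objective_eq_sum_tuple_value SA_tuple_value_pullback[OF assms(4)]
    sum_tup_eq_nested[OF assms(1,2)] sum_tup_eq_nested[OF assms(1,3)]
  by (rule sum.cong[OF refl], rule sum_tuples_map[OF assms(2,3,5)])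

definition SA_pullback_pmf :: "('a \<Rightarrow> 'b) pmf \<Rightarrow> 'a set \<Rightarrow> 'b set \<Rightarrow> 'c set
    \<Rightarrow> ('b set \<Rightarrow> ('b \<Rightarrow> 'c) \<Rightarrow> real) \<Rightarrow> 'a set \<Rightarrow> ('a \<Rightarrow> 'c) \<Rightarrow> real" where
  "SA_pullback_pmf \<omega> A B C lam X s = (\<Sum>g\<in>A \<rightarrow>\<^sub>E B. pmf \<omega> g * SA_pullback g C lam X s)"

lemma SA_feasible_pullback_pmf:
  assumes "SA_feasible k B C lam" "set_pmf \<omega> \<subseteq> A \<rightarrow>\<^sub>E B" "finite A" "finite B" "finite C"
  shows "SA_feasible k A C (SA_pullback_pmf \<omega> A B C lam)"
  unfolding SA_pullback_pmf_def
proof (rule SA_feasible_convex_combination)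
  have "finite (A \<rightarrow>\<^sub>E B)"
    using assms(3,4) by (simp add: finite_PiE)
  then show "(\<Sum>g\<in>A \<rightarrow>\<^sub>E B. pmf \<omega> g) = 1"
    using assms(2) by (rule sum_pmf_eq_1)
  show "SA_feasible k A C (SA_pullback g C lam)" if "g \<in> A \<rightarrow>\<^sub>E B" for g
    using assms(1) _ assms(3,5) by (rule SA_feasible_pullback) (use that in auto)
qed simp

lemma SA_objective_pullback_pmf:
  fixes \<omega> :: "('a \<Rightarrow> 'b) pmf"
  assumes "finite sig" "finite (fst SA)" "finite (fst SB)" "finite (fst SC)"
    and "set_pmf \<omega> \<subseteq> fst SA \<rightarrow>\<^sub>E fst SB"
  shows "SA_objective sig ar SA SC (SA_pullback_pmf \<omega> (fst SA) (fst SB) (fst SC) lam)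
       = (\<Sum>(f, ys)\<in>tup sig ar SB. SA_tuple_value SC lam f ys * measure_pmf.expectation \<omega>
            (\<lambda>g. \<Sum>xs\<in>{xs\<in>tuples ar (fst SA) f. map g xs = ys}. real_of_rat (snd SA f xs)))"
proof -
  define G where "G = fst SA \<rightarrow>\<^sub>E fst SB"
  define mass where "mass g f ys = (\<Sum>xs\<in>{xs\<in>tuples ar (fst SA) f. map g xs = ys}.
    real_of_rat (snd SA f xs))" for g :: "'a \<Rightarrow> 'b" and f ys
  have "finite G"
    unfolding G_def using assms(2,3) by (simp add: finite_PiE)
  have "SA_objective sig ar SA SC (SA_pullback_pmf \<omega> (fst SA) (fst SB) (fst SC) lam)
      = (\<Sum>g\<in>G. pmf \<omega> g * SA_objective sig ar SA SC (SA_pullback g (fst SC) lam))"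
    unfolding SA_pullback_pmf_def SA_objective_convex_combination G_def ..
  also have "\<dots> = (\<Sum>g\<in>G. pmf \<omega> g * (\<Sum>(f, ys)\<in>tup sig ar SB. SA_tuple_value SC lam f ys * mass g f ys))"
  proof (rule sum.cong[OF refl])
    fix g assume "g \<in> G"
    then have "g ` fst SA \<subseteq> fst SB"
      by (auto simp: G_def)
    show "pmf \<omega> g * SA_objective sig ar SA SC (SA_pullback g (fst SC) lam)
        = pmf \<omega> g * (\<Sum>(f, ys)\<in>tup sig ar SB. SA_tuple_value SC lam f ys * mass g f ys)"
      unfolding mass_def SA_objective_pullback[OF assms(1-4) \<open>g ` fst SA \<subseteq> fst SB\<close>] ..
  qed
  also have "\<dots> = (\<Sum>(f, ys)\<in>tup sig ar SB. SA_tuple_value SC lam f ys * (\<Sum>g\<in>G. mass g f ys * pmf \<omega> g))"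
    unfolding sum_distrib_left split_beta
    by (subst sum.swap) (simp add: mult_ac)
  also have "\<dots> = (\<Sum>(f, ys)\<in>tup sig ar SB. SA_tuple_value SC lam f ys * measure_pmf.expectation \<omega> (\<lambda>g. mass g f ys))"
    using assms(5) \<open>finite G\<close> by (subst integral_measure_pmf_real) (auto simp: G_def)
  finally show ?thesis
    unfolding mass_def .
qed

lemma SA_objective_le_pullback_pmf:
  assumes "finite sig" "is_structure sig ar SA" "is_structure sig ar SB" "is_structure sig ar SC"
    and "\<forall>f\<in>sig. ar f \<le> k" "is_overcast sig ar SA SB \<omega>" "SA_feasible k (fst SB) (fst SC) lam"
  shows "SA_objective sig ar SB SC lam
       \<le> SA_objective sig ar SA SC (SA_pullback_pmf \<omega> (fst SA) (fst SB) (fst SC) lam)"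
proof -
  have fin: "finite (fst SA)" "finite (fst SB)" "finite (fst SC)"
    using assms(2-4) by (simp_all add: is_structure_def)
  have "SA_objective sig ar SB SC lam
      = (\<Sum>(f, ys)\<in>tup sig ar SB. SA_tuple_value SC lam f ys * real_of_rat (snd SB f ys))"
    unfolding SA_objective_eq_sum_tuple_value by (simp add: mult.commute)
  also have "\<dots> \<le> (\<Sum>(f, ys)\<in>tup sig ar SB. SA_tuple_value SC lam f ys * measure_pmf.expectation \<omega>
      (\<lambda>g. \<Sum>xs\<in>{xs\<in>tuples ar (fst SA) f. map g xs = ys}. real_of_rat (snd SA f xs)))"
  proof (rule sum_mono, clarify, rule mult_left_mono)
    fix f ys assume fys: "(f, ys) \<in> tup sig ar SB"
    then show "real_of_rat (snd SB f ys) \<le> measure_pmf.expectation \<omega>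
        (\<lambda>g. \<Sum>xs\<in>{xs\<in>tuples ar (fst SA) f. map g xs = ys}. real_of_rat (snd SA f xs))"
      using assms(6) unfolding is_overcast_def by auto
    have "ar f \<le> k"
      using fys assms(5) by (auto simp: tup_def)
    with fys show "0 \<le> SA_tuple_value SC lam f ys"
      by (rule SA_tuple_value_nonneg[OF assms(7,4)])
  qed
  also have "\<dots> = SA_objective sig ar SA SC (SA_pullback_pmf \<omega> (fst SA) (fst SB) (fst SC) lam)"
    using assms(6) by (intro SA_objective_pullback_pmf[symmetric] assms(1) fin) (simp add: is_overcast_def)
  finally show ?thesis .
qed

lemma opt_frac_mono:
  assumes "is_structure sig ar SA" "is_structure sig ar SB" "is_structure sig ar SC"
    and "\<forall>f\<in>sig. ar f \<le> k"
    and "\<And>lam. SA_feasible k (fst SB) (fst SC) lam \<Longrightarrow> \<exists>lam'. SA_feasible k (fst SA) (fst SC) lam' \<and>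
           SA_objective sig ar SB SC lam \<le> SA_objective sig ar SA SC lam'"
  shows "opt_frac sig ar k SB SC \<le> opt_frac sig ar k SA SC"
  unfolding opt_frac_def
proof (rule cSup_mono)
  obtain c where "c \<in> fst SC"
    using assms(3) by (auto simp: is_structure_def)
  moreover have "finite (fst SB)" "finite (fst SC)"
    using assms(2,3) by (simp_all add: is_structure_def)
  ultimately show "{SA_objective sig ar SB SC lam | lam. SA_feasible k (fst SB) (fst SC) lam} \<noteq> {}"
    using SA_feasible_point_mass[of "fst SB" "fst SC" "\<lambda>_. c" k] by blast
  show "bdd_above {SA_objective sig ar SA SC lam | lam. SA_feasible k (fst SA) (fst SC) lam}"
    using SA_objective_le[OF assms(1,3,4)] unfolding bdd_above_def by blast
qed (use assms(5) in blast)

theorem proposition23: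
  fixes sig :: "'s set" and ar :: "'s \<Rightarrow> nat" and k :: nat
    and SA :: "('s, 'a) struct" and SB :: "('s, 'b) struct"
  assumes "finite sig"
    and "is_structure sig ar SA" and "is_structure sig ar SB"
    and "\<forall>f \<in> sig. ar f \<le> k"
    and "overcast_exists sig ar SA SB"
  shows "\<forall>SC :: ('s, 'c) struct. is_structure sig ar SC \<longrightarrow>
           opt_frac sig ar k SA SC \<ge> opt_frac sig ar k SB SC"
proof (intro allI impI)
  fix SC :: "('s, 'c) struct" assume SC: "is_structure sig ar SC"
  obtain \<omega> where \<omega>: "is_overcast sig ar SA SB \<omega>"
    using assms(5) unfolding overcast_exists_def by blast
  then have "set_pmf \<omega> \<subseteq> fst SA \<rightarrow>\<^sub>E fst SB"
    by (simp add: is_overcast_def)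
  moreover have fin: "finite (fst SA)" "finite (fst SB)" "finite (fst SC)"
    using assms(2,3) SC by (simp_all add: is_structure_def)
  ultimately show "opt_frac sig ar k SB SC \<le> opt_frac sig ar k SA SC"
    using SA_feasible_pullback_pmf[OF _ _ fin] SA_objective_le_pullback_pmf[OF assms(1-3) SC assms(4) \<omega>]
    by (intro opt_frac_mono[OF assms(2,3) SC assms(4)]) blast
qed

end
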